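(* If there exist integer weights $w_1,\ldots,w_n$ such that $|w(2^{[n]})|=a$ and $\beta(w)=b$, then there exists a uniquely decodable code pair $(A,B)$ with $A,B\subseteq\{0,1\}^n$, $|A|=a$ and $|B|=b$.
   Context: For $X\subseteq[n]$, $w(X)=\sum_{i\in X}w_i$ and $w(2^{[n]})=\{w(X):X\subseteq[n]\}$; $\beta(w)=\max_{x\in\mathbb{Z}}|\{S\subseteq[n]:w(S)=x\}|$. A pair $(A,B)$ with $A,B\subseteq\{0,1\}^n$ is a uniquely decodable code pair if $|A+B|=|\{a+b:a\in A,b\in B\}|=|A|\cdot|B|$, where addition is over $\mathbb{Z}^n$ (not modulo 2). *)

theory Defs
  imports Main
begin

text \<open>Indices [n] are represented as {0..<n}. Weights w :: nat => int, only w i for i < n matter.\<close>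

definition subset_sum :: "(nat \<Rightarrow> int) \<Rightarrow> nat set \<Rightarrow> int" where
  "subset_sum w X = (\<Sum>i\<in>X. w i)"

definition subset_sums :: "nat \<Rightarrow> (nat \<Rightarrow> int) \<Rightarrow> int set" where
  "subset_sums n w = subset_sum w ` Pow {0..<n}"

definition beta :: "nat \<Rightarrow> (nat \<Rightarrow> int) \<Rightarrow> nat" where
  "beta n w = Max ((\<lambda>x. card {S. S \<subseteq> {0..<n} \<and> subset_sum w S = x}) ` UNIV)"

text \<open>Binary vectors of length n: functions nat => int with values in {0,1} on {0..<n}
  and 0 outside (so that vectors are determined by their first n coordinates).\<close>

definition binvecs :: "nat \<Rightarrow> (nat \<Rightarrow> int) set" where
  "binvecs n = {v. (\<forall>i<n. v i \<in> {0,1}) \<and> (\<forall>i\<ge>n. v i = 0)}"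

definition sumset :: "(nat \<Rightarrow> int) set \<Rightarrow> (nat \<Rightarrow> int) set \<Rightarrow> (nat \<Rightarrow> int) set" where
  "sumset A B = {(\<lambda>i. a i + b i) | a b. a \<in> A \<and> b \<in> B}"

definition ud_code_pair :: "nat \<Rightarrow> (nat \<Rightarrow> int) set \<Rightarrow> (nat \<Rightarrow> int) set \<Rightarrow> bool" where
  "ud_code_pair n A B \<longleftrightarrow> A \<subseteq> binvecs n \<and> B \<subseteq> binvecs n \<and>
     card (sumset A B) = card A * card B"

end

theory Submission
  imports Defs "HOL-Library.Indicator_Function"
begin

text \<open>The weights define the additive functional \<open>v \<mapsto> \<Sum>\<^sub>i w\<^sub>i v\<^sub>i\<close> on binary vectors, which maps
  the indicator vector of \<open>S\<close> to \<open>w(S)\<close>. Take for \<open>A\<close> one indicator vector for each subset sum, so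
  that the functional is injective on \<open>A\<close>, and for \<open>B\<close> the indicator vectors of the \<open>\<beta>(w)\<close>
  subsets sharing a most frequent sum \<open>x\<^sub>0\<close>. From \<open>a + b\<close> the functional recovers \<open>w(a) + x\<^sub>0\<close>,
  hence \<open>a\<close>, hence \<open>b\<close>; so all sums \<open>a + b\<close> are distinct.\<close>

lemma card_sumset_eq_mult_if_additive:
  fixes f :: "(nat \<Rightarrow> int) \<Rightarrow> 'b::cancel_ab_semigroup_add"
  assumes additive: "\<And>u v. f (\<lambda>i. u i + v i) = f u + f v"
    and inj: "inj_on f A"
    and const: "\<And>v. v \<in> B \<Longrightarrow> f v = c"
  shows "card (sumset A B) = card A * card B"
proof -
  have "inj_on (\<lambda>(u, v). (\<lambda>i. u i + v i)) (A \<times> B)"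
  proof (rule inj_onI, clarify)
    fix u v u' v'
    assume u: "u \<in> A" and v: "v \<in> B" and u': "u' \<in> A" and v': "v' \<in> B"
      and eq: "(\<lambda>i. u i + v i) = (\<lambda>i. u' i + v' i)"
    have "f u + c = f u' + c"
      using arg_cong[OF eq, of f] additive const[OF v] const[OF v'] by simp
    then have "u = u'"
      using inj u u' by (simp add: inj_on_eq_iff)
    moreover have "v = v'"
      using eq \<open>u = u'\<close> by (simp add: fun_eq_iff)
    ultimately show "u = u' \<and> v = v'" ..
  qed
  moreover have "sumset A B = (\<lambda>(u, v). (\<lambda>i. u i + v i)) ` (A \<times> B)"
    unfolding sumset_def by auto
  ultimately show ?thesis
    by (simp add: card_image card_cartesian_product)
qed

definition weighted_sum :: "nat \<Rightarrow> (nat \<Rightarrow> int) \<Rightarrow> (nat \<Rightarrow> int) \<Rightarrow> int" where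
  "weighted_sum n w v = (\<Sum>i<n. w i * v i)"

lemma weighted_sum_add: "weighted_sum n w (\<lambda>i. u i + v i) = weighted_sum n w u + weighted_sum n w v"
  unfolding weighted_sum_def by (simp add: distrib_left sum.distrib)

lemma weighted_sum_indicator:
  assumes "S \<subseteq> {0..<n}"
  shows "weighted_sum n w (indicator S) = subset_sum w S"
proof -
  have "weighted_sum n w (indicator S) = (\<Sum>i\<in>{..<n} \<inter> S. w i)"
    unfolding weighted_sum_def by (simp add: indicator_def sum.inter_restrict)
  also have "{..<n} \<inter> S = S"
    using assms by auto
  finally show ?thesis
    by (simp add: subset_sum_def)
qed

lemma indicator_in_binvecs: "S \<subseteq> {0..<n} \<Longrightarrow> indicator S \<in> binvecs n"
  by (auto simp: indicator_def binvecs_def)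

lemma inj_indicator_int: "inj (indicator :: 'a set \<Rightarrow> 'a \<Rightarrow> int)"
  by (rule injI) (metis indicator_eq_0_iff indicator_eq_1_iff subsetI subset_antisym zero_neq_one)

lemma beta_attained: "\<exists>x. card {S. S \<subseteq> {0..<n} \<and> subset_sum w S = x} = beta n w"
proof -
  let ?F = "\<lambda>x. card {S. S \<subseteq> {0..<n} \<and> subset_sum w S = x}"
  have "?F ` UNIV \<subseteq> {..card (Pow {0..<n})}"
    by (auto intro!: card_mono)
  then have "finite (?F ` UNIV)"
    by (rule finite_subset) simp
  then have "Max (?F ` UNIV) \<in> ?F ` UNIV"
    by (intro Max_in) auto
  then show ?thesis
    unfolding beta_def by auto
qed

lemma subset_sum_representatives:
  obtains A where "A \<subseteq> binvecs n" "card A = card (subset_sums n w)"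
    "inj_on (weighted_sum n w) A"
proof
  define rep :: "int \<Rightarrow> nat \<Rightarrow> int"
    where "rep s = indicator (inv_into (Pow {0..<n}) (subset_sum w) s)" for s
  have rep: "rep s \<in> binvecs n \<and> weighted_sum n w (rep s) = s" if "s \<in> subset_sums n w" for s
    using that inv_into_into[of s "subset_sum w" "Pow {0..<n}"] f_inv_into_f[of s "subset_sum w"]
    unfolding rep_def subset_sums_def by (simp add: indicator_in_binvecs weighted_sum_indicator)
  show "rep ` subset_sums n w \<subseteq> binvecs n"
    using rep by auto
  have "inj_on rep (subset_sums n w)"
    by (rule inj_on_inverseI[where g = "weighted_sum n w"]) (simp add: rep)
  then show "card (rep ` subset_sums n w) = card (subset_sums n w)"
    by (rule card_image)
  show "inj_on (weighted_sum n w) (rep ` subset_sums n w)"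
    by (rule inj_on_inverseI[where g = rep]) (auto simp: rep)
qed

theorem proposition4:
  fixes n a b :: nat
  assumes "\<exists>w :: nat \<Rightarrow> int. card (subset_sums n w) = a \<and> beta n w = b"
  shows "\<exists>A B. ud_code_pair n A B \<and> card A = a \<and> card B = b"
proof -
  obtain w where wa: "card (subset_sums n w) = a" and wb: "beta n w = b"
    using assms by blast
  obtain A where A: "A \<subseteq> binvecs n" "card A = a" and inj: "inj_on (weighted_sum n w) A"
    using subset_sum_representatives wa by metis
  obtain x0 where x0: "card {S. S \<subseteq> {0..<n} \<and> subset_sum w S = x0} = b"
    using beta_attained wb by metis
  define B :: "(nat \<Rightarrow> int) set"
    where "B = indicator ` {S. S \<subseteq> {0..<n} \<and> subset_sum w S = x0}"
  have "B \<subseteq> binvecs n"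
    unfolding B_def by (auto simp: indicator_in_binvecs)
  moreover have "card B = b"
    unfolding B_def by (simp add: card_image inj_on_subset[OF inj_indicator_int] x0)
  moreover have "card (sumset A B) = card A * card B"
    using inj by (rule card_sumset_eq_mult_if_additive[OF weighted_sum_add, where c = x0])
      (auto simp: B_def weighted_sum_indicator)
  ultimately show ?thesis
    using A unfolding ud_code_pair_def by blast
qed

end
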